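(* Let $f:\mathbb{R}^n\to(-\infty,+\infty]$ be proper, lower semicontinuous and prox-bounded with threshold $\lambda_f>0$, and let $0<\lambda<\lambda_f$. Then the following are equivalent: (a) $P_\lambda f$ is firmly nonexpansive on $\mathbb{R}^n$; (b) $\partial_p^\lambda f$ is monotone; (c) $\partial_p^\lambda f$ is maximally monotone; (d) $e_\lambda f$ is convex on $\mathbb{R}^n$; (e) $f$ is convex on $\mathbb{R}^n$.
   Context: $e_\lambda f(x):=\inf_{y}\{f(y)+\frac1{2\lambda}\|y-x\|^2\}$, $P_\lambda f(x):=\operatorname{argmin}_y\{f(y)+\frac1{2\lambda}\|y-x\|^2\}$ (set-valued; firm nonexpansiveness entails single-valuedness: $\|Tx-Ty\|^2\le\langle x-y,Tx-Ty\rangle$). Prox-bounded: $e_\lambda f(x)>-\infty$ for some $\lambda>0,x$; threshold $\lambda_f$ = supremum of such $\lambda$. $v\in\partial_p^\lambda f(x)$ iff $x\in\operatorname{dom}f$ and $f(y)\ge f(x)+\langle v,y-x\rangle-\frac1{2\lambda}\|y-x\|^2$ for all $y\in\mathbb{R}^n$. *)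

theory Defs
  imports "HOL-Analysis.Analysis"
begin

text \<open>Extended-real valued functions f : R^n -> (-inf,+inf], modelled as
  'a::euclidean_space => ereal with f x \<noteq> -\<infinity>.\<close>

definition proper_fun :: "('a \<Rightarrow> ereal) \<Rightarrow> bool" where
  "proper_fun f \<longleftrightarrow> (\<forall>x. f x \<noteq> -\<infinity>) \<and> (\<exists>x. f x < \<infinity>)"

definition lsc_fun :: "('a::topological_space \<Rightarrow> ereal) \<Rightarrow> bool" where
  "lsc_fun f \<longleftrightarrow> (\<forall>x. f x \<le> Liminf (at x) f)"

definition moreau_env :: "('a::real_normed_vector \<Rightarrow> ereal) \<Rightarrow> real \<Rightarrow> 'a \<Rightarrow> ereal" where
  "moreau_env f lam x = (INF y. f y + ereal (1 / (2 * lam) * (norm (y - x))\<^sup>2))"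

definition prox_map :: "('a::real_normed_vector \<Rightarrow> ereal) \<Rightarrow> real \<Rightarrow> 'a \<Rightarrow> 'a set" where
  "prox_map f lam x = {y. \<forall>z. f y + ereal (1 / (2 * lam) * (norm (y - x))\<^sup>2)
                           \<le> f z + ereal (1 / (2 * lam) * (norm (z - x))\<^sup>2)}"

definition prox_bounded :: "('a::real_normed_vector \<Rightarrow> ereal) \<Rightarrow> bool" where
  "prox_bounded f \<longleftrightarrow> (\<exists>lam::real>0. \<exists>x. moreau_env f lam x > -\<infinity>)"

definition prox_threshold :: "('a::real_normed_vector \<Rightarrow> ereal) \<Rightarrow> ereal" where
  "prox_threshold f = Sup {ereal lam | lam. lam > 0 \<and> (\<exists>x. moreau_env f lam x > -\<infinity>)}"

definition prox_subdiff :: "('a::real_inner \<Rightarrow> ereal) \<Rightarrow> real \<Rightarrow> 'a \<Rightarrow> 'a set" where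
  "prox_subdiff f lam x = {v. f x < \<infinity> \<and>
     (\<forall>y. f y \<ge> f x + ereal (inner v (y - x) - 1 / (2 * lam) * (norm (y - x))\<^sup>2))}"

definition firmly_nonexpansive :: "('a::real_inner \<Rightarrow> 'a set) \<Rightarrow> bool" where
  "firmly_nonexpansive T \<longleftrightarrow>
     (\<forall>x y u v. u \<in> T x \<longrightarrow> v \<in> T y \<longrightarrow> (norm (u - v))\<^sup>2 \<le> inner (x - y) (u - v))"

definition monotone_op :: "('a::real_inner \<Rightarrow> 'a set) \<Rightarrow> bool" where
  "monotone_op A \<longleftrightarrow> (\<forall>x y u v. u \<in> A x \<longrightarrow> v \<in> A y \<longrightarrow> inner (x - y) (u - v) \<ge> 0)"

definition maximal_monotone_op :: "('a::real_inner \<Rightarrow> 'a set) \<Rightarrow> bool" where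
  "maximal_monotone_op A \<longleftrightarrow> monotone_op A \<and>
     (\<forall>B. monotone_op B \<and> (\<forall>x. A x \<subseteq> B x) \<longrightarrow> B = A)"

definition convex_efun :: "('a::real_vector \<Rightarrow> ereal) \<Rightarrow> bool" where
  "convex_efun f \<longleftrightarrow> (\<forall>x y t. 0 < t \<and> t < 1 \<longrightarrow>
     f ((1 - t) *\<^sub>R x + t *\<^sub>R y) \<le> ereal (1 - t) * f x + ereal t * f y)"

end

theory Submission
  imports Defs "HOL-Real_Asymp.Real_Asymp"
begin

(*
  Write e for the Moreau envelope e_lam f; it is finite because lam lies below the
  prox-threshold, P_lam f is everywhere nonempty by lower semicontinuity and coercivity, and
  for p in P_lam f x it obeys the quadratic upper bound
    e z <= e x + <(x - p)/lam, z - x> + |z - x|^2/(2 lam).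
  Moreover v is a lam-proximal subgradient at x exactly when x lies in P_lam f (x + lam v);
  this turns firm nonexpansiveness of P_lam f into monotonicity of the subdifferential, and
  nonemptiness of P_lam f into maximality.
  If e is convex, the upper bound makes (x - p)/lam a gradient of e and the Baillon-Haddad
  argument gives firm nonexpansiveness; conversely, firm nonexpansiveness makes the slopes
  (x - P x)/lam monotone, and summing the upper bound along a segment shows they are
  subgradients, so e is convex. Convexity passes from f to e directly. For the converse, f
  coincides with its proximal hull sup_x (e x - |y - x|^2/(2 lam)), which is convex when e
  is: near any y there are proximal points p of the hull, at such p the hull has a
  subgradient v, and p is then the unique common proximal point of f and of the hull at
  p + lam v, where the two agree; lower semicontinuity of f does the rest.
*)

lemma le_of_forall_diff_mult_le:
  fixes A B C :: real
  assumes "\<And>\<tau>. 0 < \<tau> \<Longrightarrow> \<tau> < 1 \<Longrightarrow> B - \<tau> * C \<le> A"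
  shows "B \<le> A"
proof (rule tendsto_le[OF trivial_limit_at_right_real])
  show "((\<lambda>\<tau>. B - \<tau> * C) \<longlongrightarrow> B) (at_right 0)"
    by (auto intro!: tendsto_eq_intros)
  have "eventually (\<lambda>\<tau>. \<tau> \<in> {0<..<1}) (at_right (0::real))"
    by (rule eventually_at_right_real) simp
  then show "eventually (\<lambda>\<tau>. B - \<tau> * C \<le> A) (at_right 0)"
    by eventually_elim (use assms in auto)
qed simp

lemma le_of_forall_diff_divide_le:
  fixes A B C :: real
  assumes "\<And>N::nat. N \<ge> 1 \<Longrightarrow> B - C / real N \<le> A"
  shows "B \<le> A"
proof (rule LIMSEQ_le_const2)
  show "(\<lambda>N. B - C / real N) \<longlonglongrightarrow> B"
    by (auto intro!: tendsto_eq_intros tendsto_divide_0[OF tendsto_const] filterlim_real_sequentially)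
qed (use assms in auto)

lemma power2_norm_convex_combination:
  fixes a b :: "'a::real_inner"
  shows "(norm ((1 - t) *\<^sub>R a + t *\<^sub>R b))\<^sup>2
    = (1 - t) * (norm a)\<^sup>2 + t * (norm b)\<^sup>2 - t * (1 - t) * (norm (a - b))\<^sup>2"
  by (simp add: power2_norm_eq_inner inner_add_left inner_add_right inner_diff_left inner_diff_right
      inner_commute algebra_simps)

lemma power2_norm_add_scaleR:
  fixes a b :: "'a::real_inner"
  shows "(norm (a + t *\<^sub>R b))\<^sup>2 = (norm a)\<^sup>2 + 2 * t * inner a b + t\<^sup>2 * (norm b)\<^sup>2"
  by (simp only: power2_norm_eq_inner)
    (simp add: inner_add_left inner_add_right inner_commute algebra_simps power2_eq_square)

lemma sq_dist_shift:
  fixes x v z :: "'a::real_inner"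
  assumes "0 < lam"
  shows "1 / (2 * lam) * (norm (z - (x + lam *\<^sub>R v)))\<^sup>2
    = 1 / (2 * lam) * (norm (z - x))\<^sup>2 - inner v (z - x) + lam / 2 * (norm v)\<^sup>2"
proof -
  have "(norm (z - (x + lam *\<^sub>R v)))\<^sup>2 = (norm ((z - x) + (- lam) *\<^sub>R v))\<^sup>2"
    by (simp add: algebra_simps)
  also have "\<dots> = (norm (z - x))\<^sup>2 - 2 * lam * inner v (z - x) + lam\<^sup>2 * (norm v)\<^sup>2"
    using power2_norm_add_scaleR[of "z - x" "- lam" v] by (simp add: inner_commute)
  finally show ?thesis
    using assms by (simp add: field_simps power2_eq_square)
qed

(* Firm nonexpansiveness of T is the same condition as firm nonexpansiveness of I - T. *)
lemma sq_norm_le_inner_iff_complement: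
  fixes d u :: "'a::real_inner"
  shows "(norm (d - u))\<^sup>2 \<le> inner d (d - u) \<longleftrightarrow> (norm u)\<^sup>2 \<le> inner d u"
proof -
  have "(norm (d - u))\<^sup>2 = inner d (d - u) - inner d u + (norm u)\<^sup>2"
    by (simp add: power2_norm_eq_inner inner_diff_left inner_diff_right inner_commute)
  then show ?thesis by linarith
qed

lemma sq_le_of_sq_divide_le:
  fixes A B D mu :: real
  assumes "0 < mu" and "D\<^sup>2 / (2 * mu) \<le> A + B * D"
  shows "D\<^sup>2 \<le> 4 * mu * A + 4 * mu\<^sup>2 * B\<^sup>2"
proof -
  have "D\<^sup>2 \<le> 2 * mu * A + 2 * mu * B * D"
    using assms by (simp add: pos_divide_le_eq algebra_simps)
  moreover have "4 * mu * B * D \<le> D\<^sup>2 + 4 * mu\<^sup>2 * B\<^sup>2"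
    using zero_le_power2[of "D - 2 * mu * B"] by (simp add: power2_eq_square algebra_simps)
  ultimately show ?thesis by linarith
qed

section \<open>Lower semicontinuity and existence of minimizers\<close>

lemma open_Collect_less_if_lsc_fun:
  fixes f :: "'a::topological_space \<Rightarrow> ereal"
  assumes "lsc_fun f"
  shows "open {z. y < f z}"
proof (subst open_subopen, intro ballI)
  fix x assume "x \<in> {z. y < f z}"
  then have "y < f x" by simp
  moreover have "\<forall>c<f x. eventually (\<lambda>z. c < f z) (at x)"
    using assms unfolding lsc_fun_def le_Liminf_iff by blast
  ultimately have "eventually (\<lambda>z. y < f z) (nhds x)"
    by (simp add: eventually_nhds_conv_at)
  then show "\<exists>T. open T \<and> x \<in> T \<and> T \<subseteq> {z. y < f z}"
    unfolding eventually_nhds by blast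
qed

lemma compact_lsc_attains_min:
  fixes \<phi> :: "'a::topological_space \<Rightarrow> 'b::linorder"
  assumes "compact S" "S \<noteq> {}" and lsc: "\<And>y. open {z. y < \<phi> z}"
  shows "\<exists>p\<in>S. \<forall>z\<in>S. \<phi> p \<le> \<phi> z"
proof (rule ccontr)
  assume "\<not> ?thesis"
  then have "S \<subseteq> (\<Union>w\<in>S. {z. \<phi> w < \<phi> z})" by (auto simp: not_le)
  then obtain W where W: "W \<subseteq> S" "finite W" "S \<subseteq> (\<Union>w\<in>W. {z. \<phi> w < \<phi> z})"
    using compactE_image[OF assms(1), of S "\<lambda>w. {z. \<phi> w < \<phi> z}"] lsc by blast
  then have "\<phi> ` W \<noteq> {}" using assms(2) by blast
  then have "Min (\<phi> ` W) \<in> \<phi> ` W" using W(2) by simp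
  then obtain w0 where w0: "w0 \<in> W" "\<phi> w0 = Min (\<phi> ` W)" by (metis imageE)
  then obtain w where "w \<in> W" "\<phi> w < \<phi> w0" using W by blast
  moreover have "\<phi> w0 \<le> \<phi> w" unfolding w0(2) using \<open>w \<in> W\<close> W(2) by simp
  ultimately show False by simp
qed

lemma lsc_attains_min:
  fixes \<phi> :: "'a::heine_borel \<Rightarrow> 'b::linorder"
  assumes lsc: "\<And>y. open {z. y < \<phi> z}" and bounded: "bounded {z. \<phi> z \<le> \<phi> z0}"
  shows "\<exists>p. \<forall>z. \<phi> p \<le> \<phi> z"
proof -
  have "closed {z. \<phi> z \<le> \<phi> z0}"
    using lsc[of "\<phi> z0"] by (simp add: closed_def Compl_eq not_le)
  with bounded have "compact {z. \<phi> z \<le> \<phi> z0}" by (simp add: compact_eq_bounded_closed)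
  then obtain p where p: "\<phi> p \<le> \<phi> z0" "\<And>z. \<phi> z \<le> \<phi> z0 \<Longrightarrow> \<phi> p \<le> \<phi> z"
    using compact_lsc_attains_min[OF _ _ lsc, of "{z. \<phi> z \<le> \<phi> z0}"] by blast
  have "\<phi> p \<le> \<phi> z" for z
  proof (cases "\<phi> z \<le> \<phi> z0")
    case False
    with p(1) show ?thesis by simp
  qed (rule p(2))
  then show ?thesis by blast
qed

lemma open_Collect_less_add_continuous:
  fixes h :: "'a::topological_space \<Rightarrow> ereal" and g :: "'a \<Rightarrow> real"
  assumes lsc: "\<And>y. open {z. y < h z}" and cont: "continuous_on UNIV g"
  shows "open {z. y < h z + ereal (g z)}"
proof -
  have eq: "{z. y < h z + ereal (g z)} = (\<Union>r. {z. ereal r < h z} \<inter> {z. y < ereal (r + g z)})"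
  proof (intro equalityI subsetI)
    fix z assume "z \<in> {z. y < h z + ereal (g z)}"
    then have "y - ereal (g z) < h z" by (simp add: ereal_minus_less_iff)
    then obtain r where "y - ereal (g z) < ereal r" "ereal r < h z" using ereal_dense2 by blast
    then have "ereal r < h z" "y < ereal (r + g z)" by (auto simp: ereal_minus_less_iff)
    then show "z \<in> (\<Union>r. {z. ereal r < h z} \<inter> {z. y < ereal (r + g z)})" by blast
  next
    fix z assume "z \<in> (\<Union>r. {z. ereal r < h z} \<inter> {z. y < ereal (r + g z)})"
    then obtain r where "ereal r < h z" "y < ereal (r + g z)" by blast
    then show "z \<in> {z. y < h z + ereal (g z)}"
      by (cases "h z") (auto elim: order.strict_trans2)
  qed
  have "open {z. y < ereal (r + g z)}" for r
    using continuous_on_ereal[OF continuous_on_add[OF continuous_on_const cont]]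
    by (rule open_Collect_less[OF continuous_on_const])
  then have "open ({z. ereal r < h z} \<inter> {z. y < ereal (r + g z)})" for r
    using lsc by (rule open_Int[rotated])
  then show ?thesis unfolding eq by (intro open_UN ballI)
qed

lemma bounded_sublevel_if_coercive:
  fixes \<phi> :: "'a::real_normed_vector \<Rightarrow> ereal"
  assumes "filterlim q at_top at_top" and growth: "\<And>z. ereal (q (norm z)) \<le> \<phi> z"
    and "\<phi> z0 < \<infinity>"
  shows "bounded {z. \<phi> z \<le> \<phi> z0}"
proof -
  have "\<exists>M. \<phi> z0 < ereal M" using \<open>\<phi> z0 < \<infinity>\<close> by (cases "\<phi> z0") (auto intro: gt_ex)
  then obtain M where M: "\<phi> z0 < ereal M" ..
  obtain R where R: "\<And>r. r \<ge> R \<Longrightarrow> M \<le> q r"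
    using assms(1) by (auto simp: filterlim_at_top eventually_at_top_linorder)
  have "{z. \<phi> z \<le> \<phi> z0} \<subseteq> cball 0 R"
  proof
    fix z assume z: "z \<in> {z. \<phi> z \<le> \<phi> z0}"
    show "z \<in> cball 0 R"
    proof (rule ccontr)
      assume "z \<notin> cball 0 R"
      then have "ereal M \<le> ereal (q (norm z))" using R by simp
      also have "\<dots> \<le> \<phi> z0" using growth[of z] z by simp
      finally show False using M by simp
    qed
  qed
  then show ?thesis by (rule bounded_subset[OF bounded_cball])
qed

lemma exists_argmin_add_sq_dist:
  fixes h :: "'a::euclidean_space \<Rightarrow> ereal"
  assumes lsc: "\<And>y. open {z. y < h z}"
    and minorant: "\<And>z. ereal (c - a * (norm z)\<^sup>2 - d * norm z) \<le> h z"
    and "0 \<le> a" "a < b" and "h z0 < \<infinity>"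
  shows "\<exists>p. \<forall>z. h p + ereal (b * (norm (p - x))\<^sup>2) \<le> h z + ereal (b * (norm (z - x))\<^sup>2)"
proof -
  define \<phi> where "\<phi> z = h z + ereal (b * (norm (z - x))\<^sup>2)" for z
  define q where "q r = c + (b - a) * r\<^sup>2 - (d + 2 * b * norm x) * r" for r
  have growth: "ereal (q (norm z)) \<le> \<phi> z" for z
  proof -
    have "inner z x \<le> norm x * norm z"
      using norm_cauchy_schwarz[of z x] by (simp add: mult.commute)
    moreover have "(norm (z - x))\<^sup>2 = (norm z)\<^sup>2 + (norm x)\<^sup>2 - 2 * inner z x"
      using dot_norm_neg[of z x] by simp
    ultimately have "(norm z)\<^sup>2 - 2 * (norm x * norm z) \<le> (norm (z - x))\<^sup>2"
      using zero_le_power2[of "norm x"] by linarith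
    then have "b * ((norm z)\<^sup>2 - 2 * (norm x * norm z)) \<le> b * (norm (z - x))\<^sup>2"
      using \<open>0 \<le> a\<close> \<open>a < b\<close> by (intro mult_left_mono) auto
    then have "ereal (q (norm z)) \<le> ereal (c - a * (norm z)\<^sup>2 - d * norm z) + ereal (b * (norm (z - x))\<^sup>2)"
      unfolding q_def by (simp add: algebra_simps)
    also have "\<dots> \<le> \<phi> z" unfolding \<phi>_def by (intro add_right_mono minorant)
    finally show ?thesis .
  qed
  have "filterlim (\<lambda>r. c + al * r\<^sup>2 - be * r) at_top at_top" if "0 < al" for al be :: real
    using that by real_asymp
  then have coercive: "filterlim q at_top at_top" unfolding q_def using \<open>a < b\<close> by simp
  have "\<phi> z0 < \<infinity>" using \<open>h z0 < \<infinity>\<close> unfolding \<phi>_def by simp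
  then have "bounded {z. \<phi> z \<le> \<phi> z0}" by (rule bounded_sublevel_if_coercive[OF coercive growth])
  moreover have "open {z. y < \<phi> z}" for y
    unfolding \<phi>_def by (rule open_Collect_less_add_continuous[OF lsc]) (intro continuous_intros)
  ultimately obtain p where "\<forall>z. \<phi> p \<le> \<phi> z" using lsc_attains_min by blast
  then show ?thesis unfolding \<phi>_def by blast
qed

section \<open>Convex functions with a quadratic upper bound\<close>

lemma convex_on_UNIV_if_subgradients:
  fixes E :: "'a::real_inner \<Rightarrow> real"
  assumes subgradient: "\<And>x z. E x + inner (G x) (z - x) \<le> E z"
  shows "convex_on UNIV E"
proof (rule convex_onI)
  fix t :: real and x y :: 'a assume t: "0 < t" "t < 1"
  define m where "m = (1 - t) *\<^sub>R x + t *\<^sub>R y"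
  have "(1 - t) *\<^sub>R (x - m) + t *\<^sub>R (y - m) = 0"
    unfolding m_def by (simp add: algebra_simps)
  then have "(1 - t) * inner (G m) (x - m) + t * inner (G m) (y - m) = 0"
    by (metis inner_add_right inner_scaleR_right inner_zero_right)
  moreover have "(1 - t) * (E m + inner (G m) (x - m)) + t * (E m + inner (G m) (y - m))
      \<le> (1 - t) * E x + t * E y"
    using subgradient t by (intro add_mono mult_left_mono) auto
  ultimately show "E m \<le> (1 - t) * E x + t * E y"
    by (simp add: algebra_simps)
qed simp

lemma subgradient_if_convex_quadratic_upper_bound:
  fixes E :: "'a::real_inner \<Rightarrow> real"
  assumes convex: "convex_on UNIV E"
    and upper: "\<And>z. E z \<le> E x + inner s (z - x) + L / 2 * (norm (z - x))\<^sup>2"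
  shows "E x + inner s (z - x) \<le> E z"
proof -
  have lower: "E x + inner s h - L / 2 * (norm h)\<^sup>2 \<le> E (x + h)" for h
  proof -
    have "(1 - 1 / 2) *\<^sub>R (x + h) + (1 / 2 :: real) *\<^sub>R (x - h) = x"
      by (simp add: algebra_simps flip: scaleR_add_left)
    then have "2 * E x \<le> E (x + h) + E (x - h)"
      using convex_onD[OF convex, of "1 / 2" "x + h" "x - h"] by simp
    moreover have "E (x - h) \<le> E x - inner s h + L / 2 * (norm h)\<^sup>2"
      using upper[where z = "x - h"] by simp
    ultimately show ?thesis by linarith
  qed
  have "inner s (z - x) - \<tau> * (L / 2 * (norm (z - x))\<^sup>2) \<le> E z - E x" if "0 < \<tau>" "\<tau> < 1" for \<tau>
  proof -
    have "x + \<tau> *\<^sub>R (z - x) = (1 - \<tau>) *\<^sub>R x + \<tau> *\<^sub>R z" by (simp add: algebra_simps)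
    then have "E (x + \<tau> *\<^sub>R (z - x)) \<le> (1 - \<tau>) * E x + \<tau> * E z"
      using convex_onD[OF convex, of \<tau> x z] that by simp
    moreover have "E x + \<tau> * inner s (z - x) - \<tau> * (\<tau> * (L / 2 * (norm (z - x))\<^sup>2)) \<le> E (x + \<tau> *\<^sub>R (z - x))"
      using lower[of "\<tau> *\<^sub>R (z - x)"] that by (simp add: power_mult_distrib power2_eq_square mult_ac)
    ultimately have "\<tau> * (inner s (z - x) - \<tau> * (L / 2 * (norm (z - x))\<^sup>2)) \<le> \<tau> * (E z - E x)"
      by (simp add: algebra_simps)
    then show ?thesis using that by simp
  qed
  then have "inner s (z - x) \<le> E z - E x" by (rule le_of_forall_diff_mult_le)
  then show ?thesis by simp
qed

(* Baillon-Haddad: compare the two bounds at the point w = b - (gb - ga) / L. *)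
lemma cocoercive_if_subgradient_quadratic_upper_bound:
  fixes E :: "'a::real_inner \<Rightarrow> real"
  assumes "0 < L"
    and subgradient: "\<And>z. E x + inner gx (z - x) \<le> E z" "\<And>z. E y + inner gy (z - y) \<le> E z"
    and upper: "\<And>z. E z \<le> E x + inner gx (z - x) + L / 2 * (norm (z - x))\<^sup>2"
      "\<And>z. E z \<le> E y + inner gy (z - y) + L / 2 * (norm (z - y))\<^sup>2"
  shows "(norm (gy - gx))\<^sup>2 \<le> L * inner (gy - gx) (y - x)"
proof -
  have half: "(norm (gb - ga))\<^sup>2 / (2 * L) \<le> E b - E a - inner ga (b - a)"
    if sub: "\<And>z. E a + inner ga (z - a) \<le> E z"
      and up: "\<And>z. E z \<le> E b + inner gb (z - b) + L / 2 * (norm (z - b))\<^sup>2" for a b ga gb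
  proof -
    define w where "w = b - (1 / L) *\<^sub>R (gb - ga)"
    have wb: "w - b = - (1 / L) *\<^sub>R (gb - ga)" and wa: "w - a = (b - a) - (1 / L) *\<^sub>R (gb - ga)"
      unfolding w_def by simp_all
    have "E a + inner ga (w - a) \<le> E b + inner gb (w - b) + L / 2 * (norm (w - b))\<^sup>2"
      using sub[of w] up[of w] by linarith
    moreover have "inner gb (w - b) - inner ga (w - a) = - inner ga (b - a) - (norm (gb - ga))\<^sup>2 / L"
      unfolding wb wa
      using \<open>0 < L\<close>
      by (simp add: inner_diff_left inner_diff_right inner_add_right power2_norm_eq_inner
          field_simps inner_commute)
    moreover have "L / 2 * (norm (w - b))\<^sup>2 = (norm (gb - ga))\<^sup>2 / (2 * L)"
      unfolding wb using \<open>0 < L\<close> by (simp add: power_mult_distrib power2_eq_square)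
    ultimately show ?thesis by linarith
  qed
  have "(norm (gy - gx))\<^sup>2 / (2 * L) + (norm (gx - gy))\<^sup>2 / (2 * L)
      \<le> (E y - E x - inner gx (y - x)) + (E x - E y - inner gy (x - y))"
    using half[OF subgradient(1) upper(2)] half[OF subgradient(2) upper(1)] by (rule add_mono)
  then have "(norm (gy - gx))\<^sup>2 / L \<le> inner (gy - gx) (y - x)"
    by (simp add: norm_minus_commute inner_diff_left inner_diff_right add_divide_distrib[symmetric])
  then show ?thesis using \<open>0 < L\<close> by (simp add: divide_le_eq mult.commute)
qed

lemma increment_ge_if_monotone_quadratic_upper_bound:
  fixes E :: "'a::real_inner \<Rightarrow> real" and G :: "'a \<Rightarrow> 'a"
  assumes upper: "\<And>x z. E z \<le> E x + inner (G x) (z - x) + L / 2 * (norm (z - x))\<^sup>2"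
    and monotone: "\<And>x z. 0 \<le> inner (G z - G x) (z - x)"
    and "0 \<le> s" "0 < \<delta>"
  shows "\<delta> * inner (G x) d - L / 2 * \<delta>\<^sup>2 * (norm d)\<^sup>2 \<le> E (x + (s + \<delta>) *\<^sub>R d) - E (x + s *\<^sub>R d)"
proof -
  define w where "w = x + (s + \<delta>) *\<^sub>R d"
  have "0 \<le> inner (G w - G x) ((s + \<delta>) *\<^sub>R d)"
    using monotone[where x = x and z = w] by (simp add: w_def)
  then have "inner (G x) d \<le> inner (G w) d"
    using assms(3,4) by (simp add: zero_le_mult_iff inner_diff_left)
  then have "\<delta> * inner (G x) d \<le> \<delta> * inner (G w) d"
    using assms(4) by (simp add: mult_left_mono)
  moreover have "x + s *\<^sub>R d - w = (- \<delta>) *\<^sub>R d"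
    by (simp add: w_def algebra_simps)
  then have "E (x + s *\<^sub>R d) \<le> E w - \<delta> * inner (G w) d + L / 2 * \<delta>\<^sup>2 * (norm d)\<^sup>2"
    using upper[where x = w and z = "x + s *\<^sub>R d"] by (simp add: power_mult_distrib)
  ultimately show ?thesis unfolding w_def by linarith
qed

(* Telescoping over N equal steps from x to z; the quadratic errors add up to O(1/N). *)
lemma subgradient_if_monotone_quadratic_upper_bound:
  fixes E :: "'a::real_inner \<Rightarrow> real" and G :: "'a \<Rightarrow> 'a"
  assumes upper: "\<And>x z. E z \<le> E x + inner (G x) (z - x) + L / 2 * (norm (z - x))\<^sup>2"
    and monotone: "\<And>x z. 0 \<le> inner (G z - G x) (z - x)"
  shows "E x + inner (G x) (z - x) \<le> E z"
proof -
  define d where "d = z - x"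
  define C where "C = L / 2 * (norm d)\<^sup>2"
  have "inner (G x) d - C / real N \<le> E z - E x" if "N \<ge> 1" for N :: nat
  proof -
    define xs where "xs k = x + (real k / real N) *\<^sub>R d" for k
    have "inner (G x) d / real N - C / (real N)\<^sup>2 \<le> E (xs (Suc k)) - E (xs k)" for k
      using increment_ge_if_monotone_quadratic_upper_bound[OF upper monotone,
          of "real k / real N" "1 / real N" x d] that
      by (simp add: xs_def C_def add_divide_distrib power_divide ac_simps)
    then have "(\<Sum>k<N. inner (G x) d / real N - C / (real N)\<^sup>2) \<le> (\<Sum>k<N. E (xs (Suc k)) - E (xs k))"
      by (rule sum_mono)
    then have "real N * (inner (G x) d / real N - C / (real N)\<^sup>2) \<le> (\<Sum>k<N. E (xs (Suc k)) - E (xs k))"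
      by simp
    also have "\<dots> = E z - E x"
      using sum_lessThan_telescope[of "\<lambda>k. E (xs k)" N] that by (simp add: xs_def d_def)
    finally show ?thesis
      using that by (simp add: right_diff_distrib power2_eq_square)
  qed
  then have "inner (G x) d \<le> E z - E x" by (rule le_of_forall_diff_divide_le)
  then show ?thesis by (simp add: d_def)
qed

section \<open>Proximal points of convex extended-real functions\<close>

lemma convex_efunD:
  assumes "convex_efun h" "0 < t" "t < 1"
  shows "h ((1 - t) *\<^sub>R x + t *\<^sub>R y) \<le> ereal (1 - t) * h x + ereal t * h y"
  using assms unfolding convex_efun_def by blast

lemma subgradient_at_argmin_add_sq_dist:
  fixes h :: "'a::real_inner \<Rightarrow> ereal"
  assumes convex: "convex_efun h" and "0 < mu"
    and argmin: "\<And>z. h p + ereal (1 / (2 * mu) * (norm (p - y))\<^sup>2)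
                    \<le> h z + ereal (1 / (2 * mu) * (norm (z - y))\<^sup>2)"
    and hp: "h p = ereal hp"
  shows "ereal (hp + inner ((1 / mu) *\<^sub>R (y - p)) (z - p)) \<le> h z"
proof (cases "h z")
  case (real hz)
  define b where "b = 1 / (2 * mu)"
  have "inner ((1 / mu) *\<^sub>R (y - p)) (z - p) - \<tau> * (b * (norm (z - p))\<^sup>2) \<le> hz - hp"
    if "0 < \<tau>" "\<tau> < 1" for \<tau>
  proof -
    define pt where "pt = (1 - \<tau>) *\<^sub>R p + \<tau> *\<^sub>R z"
    have "ereal (hp + b * (norm (p - y))\<^sup>2) \<le> h pt + ereal (b * (norm (pt - y))\<^sup>2)"
      using argmin[of pt] by (simp add: hp b_def)
    also have "h pt \<le> ereal ((1 - \<tau>) * hp + \<tau> * hz)"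
      using convex_efunD[OF convex that, of p z] by (simp add: pt_def hp real)
    finally have descent: "hp + b * (norm (p - y))\<^sup>2 \<le> (1 - \<tau>) * hp + \<tau> * hz + b * (norm (pt - y))\<^sup>2"
      by (simp add: add_right_mono)
    define I where "I = inner (p - y) (z - p)"
    have "pt - y = (p - y) + \<tau> *\<^sub>R (z - p)"
      unfolding pt_def by (simp add: algebra_simps)
    then have "(norm (pt - y))\<^sup>2 = (norm (p - y))\<^sup>2 + 2 * \<tau> * I + \<tau>\<^sup>2 * (norm (z - p))\<^sup>2"
      unfolding I_def by (simp only: power2_norm_add_scaleR)
    then have "0 \<le> \<tau> * (hz - hp + 2 * b * I + \<tau> * (b * (norm (z - p))\<^sup>2))"
      using descent by (simp add: algebra_simps power2_eq_square)
    then have "hp \<le> hz + 2 * b * I + \<tau> * (b * (norm (z - p))\<^sup>2)"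
      using that by (simp add: zero_le_mult_iff)
    moreover have "inner ((1 / mu) *\<^sub>R (y - p)) (z - p) = - 2 * b * I"
      unfolding b_def I_def using \<open>0 < mu\<close> by (simp add: inner_diff_left field_simps)
    ultimately show ?thesis by linarith
  qed
  then have "inner ((1 / mu) *\<^sub>R (y - p)) (z - p) \<le> hz - hp" by (rule le_of_forall_diff_mult_le)
  then show ?thesis using real by simp
next
  case MInf
  with argmin[of z] hp show ?thesis by simp
qed simp

lemma argmin_add_sq_dist_unique:
  fixes h :: "'a::real_inner \<Rightarrow> ereal"
  assumes convex: "convex_efun h" and "0 < lam"
    and min: "\<And>z. ereal v \<le> h z + ereal (1 / (2 * lam) * (norm (z - x))\<^sup>2)"
    and hp: "h p = ereal (v - 1 / (2 * lam) * (norm (p - x))\<^sup>2)"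
    and hr: "h r = ereal (v - 1 / (2 * lam) * (norm (r - x))\<^sup>2)"
  shows "p = r"
proof -
  define m where "m = (1 - 1 / 2) *\<^sub>R p + (1 / 2 :: real) *\<^sub>R r"
  have "ereal v \<le> h m + ereal (1 / (2 * lam) * (norm (m - x))\<^sup>2)" by (rule min)
  also have "h m \<le> ereal (1 - 1 / 2) * h p + ereal (1 / 2) * h r"
    unfolding m_def by (rule convex_efunD[OF convex]) simp_all
  finally have "v \<le> 1 / 2 * (v - 1 / (2 * lam) * (norm (p - x))\<^sup>2)
      + 1 / 2 * (v - 1 / (2 * lam) * (norm (r - x))\<^sup>2) + 1 / (2 * lam) * (norm (m - x))\<^sup>2"
    by (simp add: hp hr add_right_mono)
  moreover have "m - x = (1 - 1 / 2) *\<^sub>R (p - x) + (1 / 2 :: real) *\<^sub>R (r - x)"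
    unfolding m_def by (simp add: algebra_simps flip: scaleR_add_left)
  then have "(norm (m - x))\<^sup>2 = 1 / 2 * (norm (p - x))\<^sup>2 + 1 / 2 * (norm (r - x))\<^sup>2 - 1 / 4 * (norm (p - r))\<^sup>2"
    using power2_norm_convex_combination[of "1 / 2" "p - x" "r - x"] by simp
  ultimately have "1 / (2 * lam) * (1 / 4 * (norm (p - r))\<^sup>2) \<le> 0"
    by (simp add: algebra_simps)
  then show ?thesis using \<open>0 < lam\<close> by (simp add: mult_le_0_iff divide_le_0_iff)
qed

section \<open>The Moreau envelope below the prox-threshold\<close>

locale prox_below_threshold =
  fixes f :: "'a::euclidean_space \<Rightarrow> ereal" and lam :: real
  assumes proper: "proper_fun f" and lsc: "lsc_fun f"
    and lam_pos: "0 < lam" and below_threshold: "ereal lam < prox_threshold f"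
begin

lemma f_neq_MInf: "f x \<noteq> -\<infinity>"
  using proper unfolding proper_fun_def by blast

lemma f_finite_somewhere: obtains y where "f y < \<infinity>"
  using proper unfolding proper_fun_def by blast

lemma quadratic_minorant:
  "\<exists>a c x0. 0 \<le> a \<and> a < 1 / (2 * lam) \<and> (\<forall>y. ereal (c - a * (norm (y - x0))\<^sup>2) \<le> f y)"
proof -
  have "\<exists>l\<in>{ereal l | l. l > 0 \<and> (\<exists>x. moreau_env f l x > -\<infinity>)}. ereal lam < l"
    using below_threshold unfolding prox_threshold_def by (simp add: less_Sup_iff)
  then obtain l x0 where l: "lam < l" "-\<infinity> < moreau_env f l x0" by auto
  then obtain c where c: "ereal c < moreau_env f l x0" using ereal_dense2 by blast
  have minorant: "ereal (c - 1 / (2 * l) * (norm (y - x0))\<^sup>2) \<le> f y" for y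
  proof -
    have "moreau_env f l x0 \<le> f y + ereal (1 / (2 * l) * (norm (y - x0))\<^sup>2)"
      unfolding moreau_env_def by (rule INF_lower) simp
    then have "ereal c < f y + ereal (1 / (2 * l) * (norm (y - x0))\<^sup>2)"
      by (rule less_le_trans[OF c])
    then show ?thesis using f_neq_MInf[of y] by (cases "f y") auto
  qed
  moreover have "0 \<le> 1 / (2 * l)" and "1 / (2 * l) < 1 / (2 * lam)"
    using l(1) lam_pos by (auto simp: frac_less2)
  ultimately show ?thesis by blast
qed

lemma prox_map_nonempty: "\<exists>p. p \<in> prox_map f lam x"
proof -
  obtain a c x0 where a: "0 \<le> a" "a < 1 / (2 * lam)"
    and minorant: "\<And>y. ereal (c - a * (norm (y - x0))\<^sup>2) \<le> f y"
    using quadratic_minorant by auto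
  have "ereal (c - a * (norm x0)\<^sup>2 - a * (norm z)\<^sup>2 - 2 * a * norm x0 * norm z) \<le> f z" for z
  proof -
    have "(norm (z - x0))\<^sup>2 \<le> (norm z + norm x0)\<^sup>2"
      by (simp add: norm_triangle_ineq4 power_mono)
    then have "a * (norm (z - x0))\<^sup>2 \<le> a * (norm z + norm x0)\<^sup>2"
      using a(1) by (rule mult_left_mono)
    then have "c - a * (norm x0)\<^sup>2 - a * (norm z)\<^sup>2 - 2 * a * norm x0 * norm z \<le> c - a * (norm (z - x0))\<^sup>2"
      by (simp add: power2_sum algebra_simps)
    then show ?thesis using minorant[of z] by (meson ereal_less_eq(3) order_trans)
  qed
  moreover obtain y where "f y < \<infinity>" by (rule f_finite_somewhere)
  ultimately have "\<exists>p. \<forall>z. f p + ereal (1 / (2 * lam) * (norm (p - x))\<^sup>2)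
      \<le> f z + ereal (1 / (2 * lam) * (norm (z - x))\<^sup>2)"
    using a open_Collect_less_if_lsc_fun[OF lsc]
    by (intro exists_argmin_add_sq_dist[where c = "c - a * (norm x0)\<^sup>2" and d = "2 * a * norm x0"])
  then show ?thesis unfolding prox_map_def by simp
qed

definition prox :: "'a \<Rightarrow> 'a" where
  "prox x = (SOME p. p \<in> prox_map f lam x)"

lemma prox_in_prox_map: "prox x \<in> prox_map f lam x"
  unfolding prox_def using prox_map_nonempty by (rule someI_ex)

lemma moreau_env_le: "moreau_env f lam x \<le> f y + ereal (1 / (2 * lam) * (norm (y - x))\<^sup>2)"
  unfolding moreau_env_def by (rule INF_lower) simp

lemma moreau_env_eq_at_prox_map:
  assumes "p \<in> prox_map f lam x"
  shows "moreau_env f lam x = f p + ereal (1 / (2 * lam) * (norm (p - x))\<^sup>2)"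
proof (rule antisym)
  show "f p + ereal (1 / (2 * lam) * (norm (p - x))\<^sup>2) \<le> moreau_env f lam x"
    using assms unfolding moreau_env_def prox_map_def by (auto intro: INF_greatest)
qed (rule moreau_env_le)

definition env :: "'a \<Rightarrow> real" where
  "env x = real_of_ereal (moreau_env f lam x)"

lemma moreau_env_eq_env: "moreau_env f lam x = ereal (env x)"
proof -
  obtain y where "f y < \<infinity>" by (rule f_finite_somewhere)
  then have "f y + ereal (1 / (2 * lam) * (norm (y - x))\<^sup>2) < \<infinity>" by simp
  then have "moreau_env f lam x < \<infinity>" by (rule le_less_trans[OF moreau_env_le])
  moreover have "moreau_env f lam x \<noteq> -\<infinity>"
    using moreau_env_eq_at_prox_map[OF prox_in_prox_map] f_neq_MInf by simp
  ultimately show ?thesis unfolding env_def by (cases "moreau_env f lam x") auto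
qed

lemma env_le: "ereal (env x) \<le> f y + ereal (1 / (2 * lam) * (norm (y - x))\<^sup>2)"
  using moreau_env_le by (simp add: moreau_env_eq_env)

lemma f_at_prox_map:
  assumes "p \<in> prox_map f lam x"
  shows "f p = ereal (env x - 1 / (2 * lam) * (norm (p - x))\<^sup>2)"
  using moreau_env_eq_at_prox_map[OF assms] f_neq_MInf[of p]
  by (cases "f p") (auto simp: moreau_env_eq_env)

lemma prox_subdiff_iff: "v \<in> prox_subdiff f lam x \<longleftrightarrow> x \<in> prox_map f lam (x + lam *\<^sub>R v)"
proof
  assume "v \<in> prox_subdiff f lam x"
  then have "f x < \<infinity>"
    and below: "\<And>y. f x + ereal (inner v (y - x) - 1 / (2 * lam) * (norm (y - x))\<^sup>2) \<le> f y"
    unfolding prox_subdiff_def by auto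
  then obtain fx where fx: "f x = ereal fx" using f_neq_MInf[of x] by (cases "f x") auto
  show "x \<in> prox_map f lam (x + lam *\<^sub>R v)"
    unfolding prox_map_def sq_dist_shift[OF lam_pos]
  proof (intro CollectI allI)
    fix z
    show "f x + ereal (1 / (2 * lam) * (norm (x - x))\<^sup>2 - inner v (x - x) + lam / 2 * (norm v)\<^sup>2)
        \<le> f z + ereal (1 / (2 * lam) * (norm (z - x))\<^sup>2 - inner v (z - x) + lam / 2 * (norm v)\<^sup>2)"
      using below[of z] f_neq_MInf[of z] unfolding fx by (cases "f z") auto
  qed
next
  assume "x \<in> prox_map f lam (x + lam *\<^sub>R v)"
  then have above: "\<And>z. f x + ereal (lam / 2 * (norm v)\<^sup>2)
      \<le> f z + ereal (1 / (2 * lam) * (norm (z - x))\<^sup>2 - inner v (z - x) + lam / 2 * (norm v)\<^sup>2)"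
    unfolding prox_map_def sq_dist_shift[OF lam_pos] by simp
  obtain y where "f y < \<infinity>" by (rule f_finite_somewhere)
  then have "f x < \<infinity>" using above[of y] by (cases "f x"; cases "f y") auto
  then obtain fx where fx: "f x = ereal fx" using f_neq_MInf[of x] by (cases "f x") auto
  show "v \<in> prox_subdiff f lam x"
    unfolding prox_subdiff_def
  proof (intro CollectI conjI allI)
    show "f x < \<infinity>" by (simp add: fx)
    fix y
    show "f x + ereal (inner v (y - x) - 1 / (2 * lam) * (norm (y - x))\<^sup>2) \<le> f y"
      using above[of y] f_neq_MInf[of y] unfolding fx by (cases "f y") auto
  qed
qed

lemma firmly_nonexpansive_iff_monotone:
  "firmly_nonexpansive (prox_map f lam) \<longleftrightarrow> monotone_op (prox_subdiff f lam)"
proof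
  assume firm: "firmly_nonexpansive (prox_map f lam)"
  show "monotone_op (prox_subdiff f lam)" unfolding monotone_op_def
  proof (intro allI impI)
    fix x y u v assume "u \<in> prox_subdiff f lam x" "v \<in> prox_subdiff f lam y"
    then have "x \<in> prox_map f lam (x + lam *\<^sub>R u)" "y \<in> prox_map f lam (y + lam *\<^sub>R v)"
      by (simp_all add: prox_subdiff_iff)
    then have "(norm (x - y))\<^sup>2 \<le> inner ((x + lam *\<^sub>R u) - (y + lam *\<^sub>R v)) (x - y)"
      using firm unfolding firmly_nonexpansive_def by blast
    also have "\<dots> = (norm (x - y))\<^sup>2 + lam * inner (x - y) (u - v)"
      by (simp add: power2_norm_eq_inner inner_diff_left inner_diff_right inner_add_left
          inner_commute algebra_simps)
    finally show "0 \<le> inner (x - y) (u - v)"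
      using lam_pos by (simp add: zero_le_mult_iff)
  qed
next
  assume mono: "monotone_op (prox_subdiff f lam)"
  show "firmly_nonexpansive (prox_map f lam)" unfolding firmly_nonexpansive_def
  proof (intro allI impI)
    fix x y u v assume "u \<in> prox_map f lam x" "v \<in> prox_map f lam y"
    moreover have "u + lam *\<^sub>R ((1 / lam) *\<^sub>R (x - u)) = x" "v + lam *\<^sub>R ((1 / lam) *\<^sub>R (y - v)) = y"
      using lam_pos by simp_all
    ultimately have "(1 / lam) *\<^sub>R (x - u) \<in> prox_subdiff f lam u"
      "(1 / lam) *\<^sub>R (y - v) \<in> prox_subdiff f lam v"
      by (simp_all add: prox_subdiff_iff)
    then have "0 \<le> inner (u - v) ((1 / lam) *\<^sub>R (x - u) - (1 / lam) *\<^sub>R (y - v))"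
      using mono unfolding monotone_op_def by blast
    also have "\<dots> = (1 / lam) * (inner (x - y) (u - v) - (norm (u - v))\<^sup>2)"
      by (simp add: power2_norm_eq_inner inner_diff_left inner_diff_right inner_commute algebra_simps)
    finally show "(norm (u - v))\<^sup>2 \<le> inner (x - y) (u - v)"
      using lam_pos by (simp add: zero_le_divide_iff)
  qed
qed

lemma monotone_iff_maximal_monotone:
  "monotone_op (prox_subdiff f lam) \<longleftrightarrow> maximal_monotone_op (prox_subdiff f lam)"
proof
  assume mono: "monotone_op (prox_subdiff f lam)"
  show "maximal_monotone_op (prox_subdiff f lam)" unfolding maximal_monotone_op_def
  proof (intro conjI mono allI impI)
    fix B assume B: "monotone_op B \<and> (\<forall>x. prox_subdiff f lam x \<subseteq> B x)"
    have "w \<in> prox_subdiff f lam x" if "w \<in> B x" for x w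
    proof -
      define p where "p = prox (x + lam *\<^sub>R w)"
      define a where "a = (1 / lam) *\<^sub>R (x + lam *\<^sub>R w - p)"
      have "p + lam *\<^sub>R a = x + lam *\<^sub>R w" unfolding a_def using lam_pos by simp
      then have a: "a \<in> prox_subdiff f lam p"
        using prox_in_prox_map unfolding p_def prox_subdiff_iff by simp
      then have "0 \<le> inner (x - p) (w - a)"
        using B that unfolding monotone_op_def by blast
      moreover have "x - p = lam *\<^sub>R (a - w)"
        unfolding a_def using lam_pos by (simp add: algebra_simps)
      ultimately have "0 \<le> - lam * (norm (w - a))\<^sup>2"
        by (simp add: power2_norm_eq_inner inner_diff_left inner_diff_right inner_commute algebra_simps)
      then have "w = a" using lam_pos by (simp add: mult_le_0_iff)
      with \<open>x - p = lam *\<^sub>R (a - w)\<close> a show ?thesis by simp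
    qed
    then show "B = prox_subdiff f lam" using B by blast
  qed
qed (simp add: maximal_monotone_op_def)

lemma env_quadratic_upper_bound:
  assumes "p \<in> prox_map f lam x"
  shows "env z \<le> env x + inner ((1 / lam) *\<^sub>R (x - p)) (z - x) + (1 / lam) / 2 * (norm (z - x))\<^sup>2"
proof -
  have "ereal (env z) \<le> f p + ereal (1 / (2 * lam) * (norm (p - z))\<^sup>2)" by (rule env_le)
  then have "env z \<le> env x - 1 / (2 * lam) * (norm (p - x))\<^sup>2 + 1 / (2 * lam) * (norm (p - z))\<^sup>2"
    by (simp add: f_at_prox_map[OF assms])
  moreover have "(norm (p - z))\<^sup>2 = (norm (p - x))\<^sup>2 - 2 * inner (p - x) (z - x) + (norm (z - x))\<^sup>2"
    using dot_norm_neg[of "p - x" "z - x"] by (simp add: diff_diff_eq2)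
  ultimately show ?thesis
    using lam_pos by (simp add: field_simps inner_diff_left inner_diff_right inner_commute)
qed

lemma convex_moreau_env_iff: "convex_efun (moreau_env f lam) \<longleftrightarrow> convex_on UNIV env"
proof
  assume "convex_efun (moreau_env f lam)"
  then show "convex_on UNIV env"
    by (intro convex_onI) (auto simp: convex_efun_def moreau_env_eq_env)
next
  assume "convex_on UNIV env"
  then show "convex_efun (moreau_env f lam)"
    by (auto simp: convex_efun_def moreau_env_eq_env intro: convex_onD)
qed

lemma convex_env_if_convex:
  assumes "convex_efun f"
  shows "convex_on UNIV env"
proof (rule convex_onI)
  fix t :: real and x y :: 'a assume t: "0 < t" "t < 1"
  define p where "p = prox x"
  define r where "r = prox y"
  define Qp where "Qp = 1 / (2 * lam) * (norm (p - x))\<^sup>2"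
  define Qr where "Qr = 1 / (2 * lam) * (norm (r - y))\<^sup>2"
  have "(norm ((1 - t) *\<^sub>R (p - x) + t *\<^sub>R (r - y)))\<^sup>2 \<le> (1 - t) * (norm (p - x))\<^sup>2 + t * (norm (r - y))\<^sup>2"
    using power2_norm_convex_combination[of t "p - x" "r - y"] t
      mult_nonneg_nonneg[of "t * (1 - t)" "(norm ((p - x) - (r - y)))\<^sup>2"]
    by simp
  moreover have "(1 - t) *\<^sub>R p + t *\<^sub>R r - ((1 - t) *\<^sub>R x + t *\<^sub>R y) = (1 - t) *\<^sub>R (p - x) + t *\<^sub>R (r - y)"
    by (simp add: algebra_simps)
  ultimately have "1 / (2 * lam) * (norm ((1 - t) *\<^sub>R p + t *\<^sub>R r - ((1 - t) *\<^sub>R x + t *\<^sub>R y)))\<^sup>2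
      \<le> 1 / (2 * lam) * ((1 - t) * (norm (p - x))\<^sup>2 + t * (norm (r - y))\<^sup>2)"
    using lam_pos by (intro mult_left_mono) auto
  also have "\<dots> = (1 - t) * Qp + t * Qr"
    unfolding Qp_def Qr_def using lam_pos by (simp add: field_simps)
  finally have "1 / (2 * lam) * (norm ((1 - t) *\<^sub>R p + t *\<^sub>R r - ((1 - t) *\<^sub>R x + t *\<^sub>R y)))\<^sup>2
      \<le> (1 - t) * Qp + t * Qr" .
  moreover have "f ((1 - t) *\<^sub>R p + t *\<^sub>R r) \<le> ereal ((1 - t) * (env x - Qp) + t * (env y - Qr))"
    using convex_efunD[OF assms t, of p r]
    by (simp add: Qp_def Qr_def p_def r_def f_at_prox_map[OF prox_in_prox_map])
  ultimately have "ereal (env ((1 - t) *\<^sub>R x + t *\<^sub>R y))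
      \<le> ereal ((1 - t) * (env x - Qp) + t * (env y - Qr)) + ereal ((1 - t) * Qp + t * Qr)"
    using env_le[of "(1 - t) *\<^sub>R x + t *\<^sub>R y" "(1 - t) *\<^sub>R p + t *\<^sub>R r"]
    by (meson add_mono ereal_less_eq(3) order_trans)
  then show "env ((1 - t) *\<^sub>R x + t *\<^sub>R y) \<le> (1 - t) * env x + t * env y"
    by (simp add: algebra_simps)
qed simp

lemma subgradient_env_if_convex:
  assumes "convex_on UNIV env" and "p \<in> prox_map f lam x"
  shows "env x + inner ((1 / lam) *\<^sub>R (x - p)) (z - x) \<le> env z"
  using assms
  by (intro subgradient_if_convex_quadratic_upper_bound[where L = "1 / lam"] env_quadratic_upper_bound)

lemma firmly_nonexpansive_if_convex_env:
  assumes convex: "convex_on UNIV env"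
  shows "firmly_nonexpansive (prox_map f lam)"
  unfolding firmly_nonexpansive_def
proof (intro allI impI)
  fix x y u v assume u: "u \<in> prox_map f lam x" and v: "v \<in> prox_map f lam y"
  have "(norm ((1 / lam) *\<^sub>R (x - u) - (1 / lam) *\<^sub>R (y - v)))\<^sup>2
      \<le> 1 / lam * inner ((1 / lam) *\<^sub>R (x - u) - (1 / lam) *\<^sub>R (y - v)) (x - y)"
    using lam_pos subgradient_env_if_convex[OF convex] env_quadratic_upper_bound u v
    by (intro cocoercive_if_subgradient_quadratic_upper_bound) auto
  moreover have "(1 / lam) *\<^sub>R (x - u) - (1 / lam) *\<^sub>R (y - v) = (1 / lam) *\<^sub>R ((x - y) - (u - v))"
    by (simp add: algebra_simps)
  ultimately have "(norm ((x - y) - (u - v)))\<^sup>2 \<le> inner (x - y) ((x - y) - (u - v))"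
    using lam_pos by (simp add: power_mult_distrib power2_eq_square inner_commute divide_le_cancel)
  then show "(norm (u - v))\<^sup>2 \<le> inner (x - y) (u - v)"
    by (simp add: sq_norm_le_inner_iff_complement)
qed

lemma convex_env_if_firmly_nonexpansive:
  assumes firm: "firmly_nonexpansive (prox_map f lam)"
  shows "convex_on UNIV env"
proof (rule convex_on_UNIV_if_subgradients)
  let ?G = "\<lambda>x. (1 / lam) *\<^sub>R (x - prox x)"
  have "0 \<le> inner (?G z - ?G x) (z - x)" for x z
  proof -
    have "(norm (prox z - prox x))\<^sup>2 \<le> inner (z - x) (prox z - prox x)"
      using firm prox_in_prox_map unfolding firmly_nonexpansive_def by blast
    then have "(norm ((z - x) - (prox z - prox x)))\<^sup>2 \<le> inner (z - x) ((z - x) - (prox z - prox x))"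
      by (simp add: sq_norm_le_inner_iff_complement)
    then have "0 \<le> inner ((z - x) - (prox z - prox x)) (z - x)"
      by (metis inner_commute order_trans zero_le_power2)
    moreover have "?G z - ?G x = (1 / lam) *\<^sub>R ((z - x) - (prox z - prox x))"
      by (simp add: algebra_simps)
    ultimately show ?thesis
      using lam_pos by simp
  qed
  then show "env x + inner (?G x) (z - x) \<le> env z" for x z
    using env_quadratic_upper_bound[OF prox_in_prox_map]
    by (intro subgradient_if_monotone_quadratic_upper_bound)
qed

subsection \<open>The proximal hull\<close>

definition prox_hull :: "'a \<Rightarrow> ereal" where
  "prox_hull y = (SUP x. ereal (env x - 1 / (2 * lam) * (norm (y - x))\<^sup>2))"

lemma prox_hull_ge: "ereal (env x - 1 / (2 * lam) * (norm (y - x))\<^sup>2) \<le> prox_hull y"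
  unfolding prox_hull_def by (rule SUP_upper) simp

lemma env_le_prox_hull: "ereal (env y) \<le> prox_hull y"
  using prox_hull_ge[of y y] by simp

lemma prox_hull_neq_MInf: "prox_hull y \<noteq> -\<infinity>"
  using env_le_prox_hull[of y] by auto

lemma prox_hull_le: "prox_hull y \<le> f y"
  unfolding prox_hull_def
proof (rule SUP_least)
  fix x
  show "ereal (env x - 1 / (2 * lam) * (norm (y - x))\<^sup>2) \<le> f y"
    using env_le[of x y] f_neq_MInf[of y] by (cases "f y") auto
qed

lemma open_Collect_less_prox_hull: "open {z. c < prox_hull z}"
proof -
  have eq: "{z. c < prox_hull z} = (\<Union>x. {z. c < ereal (env x - 1 / (2 * lam) * (norm (z - x))\<^sup>2)})"
    by (auto simp: prox_hull_def less_SUP_iff)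
  have "continuous_on UNIV (\<lambda>z. env x - 1 / (2 * lam) * (norm (z - x))\<^sup>2)" for x
    by (intro continuous_intros)
  then have "open {z. c < ereal (env x - 1 / (2 * lam) * (norm (z - x))\<^sup>2)}" for x
    by (rule open_Collect_less[OF continuous_on_const continuous_on_ereal])
  then show ?thesis unfolding eq by (intro open_UN ballI)
qed

lemma convex_prox_hull:
  assumes convex: "convex_on UNIV env"
  shows "convex_efun prox_hull"
  unfolding convex_efun_def
proof (intro allI impI)
  fix y0 y1 :: 'a and t :: real assume t: "0 < t \<and> t < 1"
  define yt where "yt = (1 - t) *\<^sub>R y0 + t *\<^sub>R y1"
  show "prox_hull ((1 - t) *\<^sub>R y0 + t *\<^sub>R y1) \<le> ereal (1 - t) * prox_hull y0 + ereal t * prox_hull y1"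
    unfolding yt_def[symmetric] unfolding prox_hull_def[of yt]
  proof (rule SUP_least)
    fix x
    define x0 where "x0 = x + (y0 - yt)"
    define x1 where "x1 = x + (y1 - yt)"
    define Q where "Q = 1 / (2 * lam) * (norm (yt - x))\<^sup>2"
    have "(1 - t) *\<^sub>R x0 + t *\<^sub>R x1 = x"
      unfolding x0_def x1_def yt_def by (simp add: algebra_simps)
    then have "env x \<le> (1 - t) * env x0 + t * env x1"
      using convex_onD[OF convex, of t x0 x1] t by simp
    then have "ereal (env x - Q) \<le> ereal (1 - t) * ereal (env x0 - Q) + ereal t * ereal (env x1 - Q)"
      by (simp add: algebra_simps)
    also have "\<dots> \<le> ereal (1 - t) * prox_hull y0 + ereal t * prox_hull y1"
      using prox_hull_ge[of x0 y0] prox_hull_ge[of x1 y1] t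
      unfolding Q_def x0_def x1_def by (intro add_mono ereal_mult_left_mono) (auto simp: algebra_simps)
    finally show "ereal (env x - 1 / (2 * lam) * (norm (yt - x))\<^sup>2)
        \<le> ereal (1 - t) * prox_hull y0 + ereal t * prox_hull y1"
      unfolding Q_def .
  qed
qed

(*
  Both p and prox (p + lam v) minimize prox_hull + |. - (p + lam v)|^2 / (2 lam), with the
  value env (p + lam v); strict convexity makes them coincide.
*)
lemma f_eq_prox_hull_if_subgradient:
  assumes convex: "convex_on UNIV env" and hp: "prox_hull p = ereal hp"
    and subgradient: "\<And>z. ereal (hp + inner v (z - p)) \<le> prox_hull z"
  shows "f p = ereal hp"
proof -
  define x where "x = p + lam *\<^sub>R v"
  define q where "q z = 1 / (2 * lam) * (norm (z - x))\<^sup>2" for z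
  have env_min: "ereal (env x) \<le> prox_hull z + ereal (q z)" for z
    using prox_hull_ge[of x z] prox_hull_neq_MInf[of z] unfolding q_def
    by (cases "prox_hull z") (auto simp: norm_minus_commute)
  have p_min: "ereal (hp + q p) \<le> prox_hull z + ereal (q z)" for z
  proof -
    have "ereal (hp + q p) \<le> ereal (hp + inner v (z - p)) + ereal (q z)"
      using lam_pos unfolding q_def x_def sq_dist_shift[OF lam_pos] by simp
    also have "\<dots> \<le> prox_hull z + ereal (q z)" using subgradient[of z] by (rule add_right_mono)
    finally show ?thesis .
  qed
  define r where "r = prox x"
  have fr: "f r = ereal (env x - q r)"
    unfolding r_def q_def by (rule f_at_prox_map[OF prox_in_prox_map])
  have hull_r: "prox_hull r = ereal (env x - q r)"
    using prox_hull_le[of r] prox_hull_ge[of x r] unfolding fr q_def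
    by (simp add: norm_minus_commute)
  have min_value: "hp + q p = env x"
    using p_min[of r] env_min[of p] unfolding hull_r hp by simp
  have "p = r"
  proof (rule argmin_add_sq_dist_unique[OF convex_prox_hull[OF convex] lam_pos])
    show "ereal (env x) \<le> prox_hull z + ereal (1 / (2 * lam) * (norm (z - x))\<^sup>2)" for z
      using env_min[of z] unfolding q_def .
    show "prox_hull p = ereal (env x - 1 / (2 * lam) * (norm (p - x))\<^sup>2)"
      using hp min_value unfolding q_def by simp
    show "prox_hull r = ereal (env x - 1 / (2 * lam) * (norm (r - x))\<^sup>2)"
      using hull_r unfolding q_def .
  qed
  then show ?thesis using fr hull_r hp by simp
qed

lemma sq_dist_prox_hull_argmin_le:
  assumes convex: "convex_on UNIV env" and "0 < mu"
    and argmin: "\<And>z. prox_hull p + ereal (1 / (2 * mu) * (norm (p - y))\<^sup>2)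
                    \<le> prox_hull z + ereal (1 / (2 * mu) * (norm (z - y))\<^sup>2)"
    and hy: "prox_hull y = ereal hy"
  shows "(norm (p - y))\<^sup>2 \<le> 4 * mu * (hy - env y) + 4 * mu\<^sup>2 * (norm ((1 / lam) *\<^sub>R (y - prox y)))\<^sup>2"
proof (rule sq_le_of_sq_divide_le[OF \<open>0 < mu\<close>])
  define g where "g = (1 / lam) *\<^sub>R (y - prox y)"
  have "prox_hull p + ereal (1 / (2 * mu) * (norm (p - y))\<^sup>2) \<le> ereal hy"
    using argmin[of y] by (simp add: hy)
  moreover obtain hp where hp: "prox_hull p = ereal hp"
    using calculation prox_hull_neq_MInf[of p] by (cases "prox_hull p") auto
  ultimately have "hp + (norm (p - y))\<^sup>2 / (2 * mu) \<le> hy" by simp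
  moreover have "env p \<le> hp" using env_le_prox_hull[of p] by (simp add: hp)
  moreover have "env y + inner g (p - y) \<le> env p"
    unfolding g_def by (rule subgradient_env_if_convex[OF convex prox_in_prox_map])
  moreover have "- (norm g * norm (p - y)) \<le> inner g (p - y)"
    using norm_cauchy_schwarz[of g "y - p"] by (simp add: inner_diff_right norm_minus_commute)
  ultimately show "(norm (p - y))\<^sup>2 / (2 * mu) \<le> hy - env y + norm g * norm (p - y)"
    by linarith
qed

lemma exists_prox_hull_argmin:
  assumes convex: "convex_on UNIV env" and "0 < mu" and "prox_hull y < \<infinity>"
  shows "\<exists>p. \<forall>z. prox_hull p + ereal (1 / (2 * mu) * (norm (p - y))\<^sup>2)
      \<le> prox_hull z + ereal (1 / (2 * mu) * (norm (z - y))\<^sup>2)"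
proof -
  define g where "g = (1 / lam) *\<^sub>R (0 - prox 0)"
  have "ereal (env 0 - 0 * (norm z)\<^sup>2 - norm g * norm z) \<le> prox_hull z" for z
  proof -
    have "env 0 + inner g z \<le> env z"
      using subgradient_env_if_convex[OF convex prox_in_prox_map, of 0 z] unfolding g_def by simp
    moreover have "- (norm g * norm z) \<le> inner g z"
      using norm_cauchy_schwarz[of g "- z"] by simp
    ultimately have "env 0 - 0 * (norm z)\<^sup>2 - norm g * norm z \<le> env z" by linarith
    then show ?thesis using env_le_prox_hull[of z] by (meson ereal_less_eq(3) order_trans)
  qed
  then show ?thesis
    using exists_argmin_add_sq_dist[OF open_Collect_less_prox_hull, of "env 0" 0 "norm g" "1 / (2 * mu)" y y]
      assms(2,3) by simp
qed

(*
  Proximal points of the hull for small parameters lie close to y, and f equals the hull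
  there; lower semicontinuity of f therefore rules out prox_hull y < f y.
*)
lemma f_le_prox_hull:
  assumes convex: "convex_on UNIV env"
  shows "f y \<le> prox_hull y"
proof (rule ccontr)
  assume "\<not> f y \<le> prox_hull y"
  then have less: "prox_hull y < f y" by simp
  then obtain hy where hy: "prox_hull y = ereal hy"
    using prox_hull_neq_MInf[of y] by (cases "prox_hull y") auto
  have "\<exists>\<delta>>0. \<forall>z. dist z y < \<delta> \<longrightarrow> prox_hull y < f z"
    using open_Collect_less_if_lsc_fun[OF lsc, of "prox_hull y"] less unfolding open_dist by simp
  then obtain \<delta> where "0 < \<delta>" and near: "\<And>z. dist z y < \<delta> \<Longrightarrow> prox_hull y < f z" by blast
  define bound where
    "bound mu = 4 * mu * (hy - env y) + 4 * mu\<^sup>2 * (norm ((1 / lam) *\<^sub>R (y - prox y)))\<^sup>2" for mu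
  have "(bound \<longlongrightarrow> 0) (at_right 0)"
    unfolding bound_def by (auto intro!: tendsto_eq_intros)
  then have "eventually (\<lambda>mu. bound mu < \<delta>\<^sup>2) (at_right 0)"
    using \<open>0 < \<delta>\<close> by (intro order_tendstoD(2)) auto
  then obtain mu where "0 < mu" and mu: "bound mu < \<delta>\<^sup>2"
    using eventually_happens'[OF trivial_limit_at_right_real eventually_conj[OF eventually_at_right_less]]
    by blast
  then obtain p where argmin: "\<And>z. prox_hull p + ereal (1 / (2 * mu) * (norm (p - y))\<^sup>2)
      \<le> prox_hull z + ereal (1 / (2 * mu) * (norm (z - y))\<^sup>2)"
    using exists_prox_hull_argmin[OF convex] hy by fastforce
  have sum_le: "prox_hull p + ereal ((norm (p - y))\<^sup>2 / (2 * mu)) \<le> ereal hy"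
    using argmin[of y] hy by simp
  then obtain hp where hp: "prox_hull p = ereal hp"
    using prox_hull_neq_MInf[of p] by (cases "prox_hull p") auto
  have "hp + (norm (p - y))\<^sup>2 / (2 * mu) \<le> hy" using sum_le by (simp add: hp)
  moreover have "0 \<le> (norm (p - y))\<^sup>2 / (2 * mu)" using \<open>0 < mu\<close> by simp
  ultimately have "hp \<le> hy" by linarith
  have "f p = ereal hp"
    using subgradient_at_argmin_add_sq_dist[OF convex_prox_hull[OF convex] \<open>0 < mu\<close> argmin hp]
    by (rule f_eq_prox_hull_if_subgradient[OF convex hp])
  moreover have "(norm (p - y))\<^sup>2 < \<delta>\<^sup>2"
    using sq_dist_prox_hull_argmin_le[OF convex \<open>0 < mu\<close> argmin hy] mu unfolding bound_def
    by linarith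
  then have "prox_hull y < f p"
    using near \<open>0 < \<delta>\<close> by (simp add: dist_norm power_less_imp_less_base)
  ultimately show False using hy \<open>hp \<le> hy\<close> by simp
qed

lemma convex_if_convex_env:
  assumes "convex_on UNIV env"
  shows "convex_efun f"
proof -
  have "f = prox_hull"
    using f_le_prox_hull[OF assms] prox_hull_le by (intro ext antisym)
  then show ?thesis using convex_prox_hull[OF assms] by simp
qed

end

theorem mainTheorem3:
  fixes f :: "'a::euclidean_space \<Rightarrow> ereal" and lam :: real
  assumes "proper_fun f" and "lsc_fun f" and "prox_bounded f"
    and "prox_threshold f > 0"
    and "0 < lam" and "ereal lam < prox_threshold f"
  shows "(firmly_nonexpansive (prox_map f lam) \<longleftrightarrow> monotone_op (prox_subdiff f lam))
       \<and> (monotone_op (prox_subdiff f lam) \<longleftrightarrow> maximal_monotone_op (prox_subdiff f lam))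
       \<and> (maximal_monotone_op (prox_subdiff f lam) \<longleftrightarrow> convex_efun (moreau_env f lam))
       \<and> (convex_efun (moreau_env f lam) \<longleftrightarrow> convex_efun f)"
proof -
  (* prox_bounded f and 0 < prox_threshold f already follow from 0 < lam < prox_threshold f. *)
  interpret prox_below_threshold f lam
    using assms by unfold_locales
  have "maximal_monotone_op (prox_subdiff f lam) \<longleftrightarrow> convex_on UNIV env"
    using firmly_nonexpansive_iff_monotone monotone_iff_maximal_monotone
      firmly_nonexpansive_if_convex_env convex_env_if_firmly_nonexpansive by blast
  moreover have "convex_on UNIV env \<longleftrightarrow> convex_efun f"
    using convex_if_convex_env convex_env_if_convex by blast
  ultimately show ?thesis
    using firmly_nonexpansive_iff_monotone monotone_iff_maximal_monotone convex_moreau_env_iff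
    by simp
qed

end
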